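(* Let $H=((0,100],(0,100],p_1,p_2)$ be the two-player game with $p_1(s_1,s_2)=s_1(100-s_1)$ if $s_1<s_2$, $=s_1(100-s_1)/2$ if $s_1=s_2$, $=0$ if $s_1>s_2$, and symmetrically $p_2(s_1,s_2)=s_2(100-s_2)$ if $s_2<s_1$, $=s_2(100-s_2)/2$ if $s_1=s_2$, $=0$ if $s_2>s_1$; take the pure belief structure. Then: (a) $\overline{LR}(H)=(\{50\},\{50\})$ and $(\{50\},\{50\})$ is a fixpoint of $\overline{LR}$, so the outcome of $\overline{LR}$ is $(\{50\},\{50\})$; (b) the operator $R$ defined by $R(H):=((0,50],(0,50])$ and $R(G):=\overline{LR}(G)$ for $G\neq H$ is a relaxation of $\overline{LR}$ whose outcome is $(\emptyset,\emptyset)$; hence $\overline{LR}$ is not order independent; (c) $\overline{GR}(H)=(\{50\},\{50\})$ and $\overline{GR}^2=(\emptyset,\emptyset)$, so the outcome of $\overline{GR}$ is $(\emptyset,\emptyset)$; (d) $LR^1=(\{50\},\{50\})$ while $LR^2$ contains the joint strategy $(49,49)$, so $LR^2\not\subseteq LR^1$.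
   Context: Restrictions of $H$ are pairs $(S_1,S_2)$ with $S_i\subseteq(0,100]$, ordered componentwise. Pure belief structure: beliefs of player $i$ in $G=(S_1,S_2)$ are the opponent's strategies in $S_{-i}$. $s_i\in BR_G(\mu_i)$ iff $p_i(s_i,\mu_i)\ge p_i(s_i',\mu_i)$ for all $s_i'\in S_i$. $GR(G)_i:=\{s_i\mid\exists\mu_i\in S_{-i}: s_i\in BR_H(\mu_i)\}$; $LR(G)_i:=\{s_i\mid\exists\mu_i\in S_{-i}: s_i\in BR_G(\mu_i)\}$; $\overline{T}(G):=T(G)\cap G$. Iterations: $T^0:=H$, $T^{\alpha+1}:=T(T^\alpha)$, $T^\beta:=\bigcap_{\alpha<\beta}T^\alpha$ for limit $\beta$; outcome = first iterate with $T^{\alpha+1}=T^\alpha$. $R$ is a relaxation of $T$ if for all ordinals $\alpha$: (1) $T(R^\alpha)\subseteq R(R^\alpha)$; (2) if $T(R^\alpha)\subseteq R^\alpha$ then $R(R^\alpha)\subseteq R^\alpha$; (3) if $R(R^\alpha)=R^\alpha$ then $T(R^\alpha)=R^\alpha$. $T$ is order independent if the set of outcomes of relaxations of $T$ has at most one element. *)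

theory Defs
  imports Complex_Main
begin

type_synonym restr = "real set \<times> real set"

definition rle :: "restr \<Rightarrow> restr \<Rightarrow> bool" where
  "rle G G' \<longleftrightarrow> fst G \<subseteq> fst G' \<and> snd G \<subseteq> snd G'"

definition Strat :: "real set" where
  "Strat = {0<..100}"

definition Hg :: restr where
  "Hg = (Strat, Strat)"

definition p1 :: "real \<Rightarrow> real \<Rightarrow> real" where
  "p1 s1 s2 = (if s1 < s2 then s1 * (100 - s1)
               else if s1 = s2 then s1 * (100 - s1) / 2 else 0)"

definition p2 :: "real \<Rightarrow> real \<Rightarrow> real" where
  "p2 s1 s2 = (if s2 < s1 then s2 * (100 - s2)
               else if s1 = s2 then s2 * (100 - s2) / 2 else 0)"

text \<open>Best responses in restriction G to a pure belief mu (a strategy of the opponent).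
  Candidate strategies range over the strategies of H; comparison is against S_i of G.\<close>
definition BR1 :: "restr \<Rightarrow> real \<Rightarrow> real set" where
  "BR1 G mu = {s1 \<in> Strat. \<forall>s' \<in> fst G. p1 s1 mu \<ge> p1 s' mu}"

definition BR2 :: "restr \<Rightarrow> real \<Rightarrow> real set" where
  "BR2 G mu = {s2 \<in> Strat. \<forall>s' \<in> snd G. p2 mu s2 \<ge> p2 mu s'}"

definition LR :: "restr \<Rightarrow> restr" where
  "LR G = ({s1. \<exists>mu \<in> snd G. s1 \<in> BR1 G mu}, {s2. \<exists>mu \<in> fst G. s2 \<in> BR2 G mu})"

definition GR :: "restr \<Rightarrow> restr" where
  "GR G = ({s1. \<exists>mu \<in> snd G. s1 \<in> BR1 Hg mu}, {s2. \<exists>mu \<in> fst G. s2 \<in> BR2 Hg mu})"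

definition barop :: "(restr \<Rightarrow> restr) \<Rightarrow> restr \<Rightarrow> restr" where
  "barop T G = (fst (T G) \<inter> fst G, snd (T G) \<inter> snd G)"

text \<open>Transfinite iteration, ordinals represented by elements of a well-ordered type 'o.\<close>
definition succ_of :: "'o::wellorder \<Rightarrow> 'o \<Rightarrow> bool" where
  "succ_of b a \<longleftrightarrow> b < a \<and> (\<forall>c. \<not> (b < c \<and> c < a))"

definition iter :: "restr \<Rightarrow> (restr \<Rightarrow> restr) \<Rightarrow> 'o::wellorder \<Rightarrow> restr" where
  "iter H0 T = wfrec {(x, y). x < y}
     (\<lambda>f a. if \<exists>b. succ_of b a then T (f (THE b. succ_of b a))
            else (fst H0 \<inter> \<Inter> ((\<lambda>b. fst (f b)) ` {..<a}),
                  snd H0 \<inter> \<Inter> ((\<lambda>b. snd (f b)) ` {..<a})))"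

definition relaxation :: "'o::wellorder itself \<Rightarrow> restr \<Rightarrow> (restr \<Rightarrow> restr) \<Rightarrow> (restr \<Rightarrow> restr) \<Rightarrow> bool" where
  "relaxation _ H0 R T \<longleftrightarrow> (\<forall>a::'o. let X = iter H0 R a in
      rle (T X) (R X) \<and> (rle (T X) X \<longrightarrow> rle (R X) X) \<and> (R X = X \<longrightarrow> T X = X))"

definition outcome :: "'o::wellorder itself \<Rightarrow> restr \<Rightarrow> (restr \<Rightarrow> restr) \<Rightarrow> restr \<Rightarrow> bool" where
  "outcome _ H0 T X \<longleftrightarrow> (\<exists>a::'o. iter H0 T a = X \<and> T X = X \<and>
      (\<forall>b<a. T (iter H0 T b) \<noteq> iter H0 T b))"

definition order_independent :: "'o::wellorder itself \<Rightarrow> restr \<Rightarrow> (restr \<Rightarrow> restr) \<Rightarrow> bool" where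
  "order_independent t H0 T \<longleftrightarrow> (\<forall>X Y.
      (\<exists>R. relaxation t H0 R T \<and> outcome t H0 R X) \<longrightarrow>
      (\<exists>R. relaxation t H0 R T \<and> outcome t H0 R Y) \<longrightarrow> X = Y)"

definition Rrel :: "restr \<Rightarrow> restr" where
  "Rrel G = (if G = Hg then ({0<..50}, {0<..50}) else barop LR G)"

end

theory Submission
  imports Defs
begin

text \<open>The lower of the two bids earns s (100 - s), which peaks at 50. Against a belief mu \<le> 50 no
  strategy is a best response as long as all strategies below mu are available, because
  undercutting always pays; against mu > 50 the unique best response is 50. So LR and GR both
  shrink H to ({50}, {50}) in one step. There LR, comparing only with 50 itself, is stuck (and
  even admits 49), whereas GR, comparing with all of H, finds no best response to 50 and empties
  the restriction. The relaxation R instead cuts H to (0, 50], where no belief has a best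
  response, so it reaches the empty restriction although LR stops at ({50}, {50}).\<close>

lemma the_succ_of: "succ_of b a \<Longrightarrow> (THE b. succ_of b a) = b"
  unfolding succ_of_def by (rule the_equality) (auto dest: not_less_iff_gr_or_eq[THEN iffD1])

lemma iter_unfold:
  "iter H0 T (a::'o::wellorder) = (if \<exists>b. succ_of b a then T (iter H0 T (THE b. succ_of b a))
     else (fst H0 \<inter> \<Inter> ((\<lambda>b. fst (iter H0 T b)) ` {..<a}),
           snd H0 \<inter> \<Inter> ((\<lambda>b. snd (iter H0 T b)) ` {..<a})))"
proof -
  let ?f = "cut (iter H0 T) {(x, y). x < y} a"
  have unfold: "iter H0 T a = (if \<exists>b. succ_of b a then T (?f (THE b. succ_of b a))
     else (fst H0 \<inter> \<Inter> ((\<lambda>b. fst (?f b)) ` {..<a}), snd H0 \<inter> \<Inter> ((\<lambda>b. snd (?f b)) ` {..<a})))"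
    unfolding iter_def by (rule wfrec[OF wf])
  have below: "b < a \<Longrightarrow> ?f b = iter H0 T b" for b
    by (simp add: cut_apply)
  show ?thesis
  proof (cases "\<exists>b. succ_of b a")
    case True
    then obtain b where b: "succ_of b a" ..
    then have "b < a" by (simp add: succ_of_def)
    with unfold b show ?thesis by (simp add: the_succ_of below)
  next
    case False
    with unfold show ?thesis by (simp add: below)
  qed
qed

lemma iter_succ: "succ_of b a \<Longrightarrow> iter H0 T a = T (iter H0 T b)"
  by (subst iter_unfold) (auto simp: the_succ_of)

lemma iter_lessThan_empty: "{..<a} = {} \<Longrightarrow> iter H0 T a = H0"
  by (subst iter_unfold) (auto simp: succ_of_def)

lemma iter_stays_empty:
  assumes "T ({}, {}) = ({}, {})" and "iter H0 T a = ({}, {})" and "a \<le> b"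
  shows "iter H0 T b = ({}, {})"
  using \<open>a \<le> b\<close>
proof (induction b rule: less_induct)
  case (less b)
  show ?case
  proof (cases "a = b")
    case True
    with assms(2) show ?thesis by simp
  next
    case False
    with less.prems have "a < b" by simp
    show ?thesis
    proof (cases "\<exists>c. succ_of c b")
      case True
      then obtain c where c: "succ_of c b" ..
      with \<open>a < b\<close> have "c < b" "a \<le> c"
        unfolding succ_of_def by (auto simp: not_less[symmetric])
      with less.IH have "iter H0 T c = ({}, {})" by blast
      with c assms(1) show ?thesis by (simp add: iter_succ)
    next
      case False
      with \<open>a < b\<close> assms(2) show ?thesis
        by (subst iter_unfold) (auto simp: prod_eq_iff)
    qed
  qed
qed

primrec ordinal_of_nat :: "nat \<Rightarrow> 'o::wellorder" where
  "ordinal_of_nat 0 = (LEAST a. True)"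
| "ordinal_of_nat (Suc n) = (LEAST a. ordinal_of_nat n < a)"

lemma lessThan_Least_greater:
  fixes a :: "'o::wellorder"
  assumes "a < x"
  shows "{..<LEAST b. a < b} = {..a}"
  using LeastI[of "\<lambda>b. a < b", OF assms] not_less_Least[of _ "\<lambda>b. a < b"]
  by (auto simp: not_less intro: le_less_trans)

lemma lessThan_ordinal_of_nat:
  assumes "infinite (UNIV :: 'o::wellorder set)"
  shows "{..<ordinal_of_nat n :: 'o} = ordinal_of_nat ` {..<n}"
proof (induction n)
  case 0
  show ?case by (auto dest: not_less_Least[of _ "\<lambda>_. True"])
next
  case (Suc n)
  let ?a = "ordinal_of_nat n :: 'o"
  have atMost_a: "{..?a} = insert ?a {..<?a}" by auto
  with Suc have "finite {..?a}" by simp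
  then obtain x where "x \<notin> {..?a}" using ex_new_if_finite[OF assms] by blast
  then have "{..<ordinal_of_nat (Suc n)} = {..?a}"
    by (simp add: lessThan_Least_greater not_le)
  with Suc atMost_a show ?case by (simp add: lessThan_Suc)
qed

lemma succ_of_if_lessThan_eq_atMost:
  fixes a b :: "'o::wellorder"
  assumes "{..<b} = {..a}"
  shows "succ_of a b"
proof -
  have "c < b \<longleftrightarrow> c \<le> a" for c
    using assms by (simp add: set_eq_iff)
  then show ?thesis
    unfolding succ_of_def by (auto simp: not_le[symmetric])
qed

lemma succ_of_ordinal_of_nat:
  assumes "infinite (UNIV :: 'o::wellorder set)"
  shows "succ_of (ordinal_of_nat n :: 'o) (ordinal_of_nat (Suc n))"
proof (rule succ_of_if_lessThan_eq_atMost)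
  have "{..<ordinal_of_nat (Suc n) :: 'o} = insert (ordinal_of_nat n) {..<ordinal_of_nat n}"
    by (simp only: lessThan_ordinal_of_nat[OF assms] lessThan_Suc image_insert)
  also have "\<dots> = {..ordinal_of_nat n}"
    by auto
  finally show "{..<ordinal_of_nat (Suc n) :: 'o} = {..ordinal_of_nat n}" .
qed

lemma iter_ordinal_of_nat:
  assumes "infinite (UNIV :: 'o::wellorder set)"
  shows "iter H0 T (ordinal_of_nat n :: 'o) = (T ^^ n) H0"
proof (induction n)
  case 0
  show ?case using lessThan_ordinal_of_nat[OF assms, of 0] by (simp add: iter_lessThan_empty)
next
  case (Suc n)
  have "iter H0 T (ordinal_of_nat (Suc n) :: 'o) = T (iter H0 T (ordinal_of_nat n :: 'o))"
    by (intro iter_succ succ_of_ordinal_of_nat assms)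
  with Suc show ?case by simp
qed

lemma outcome_funpow:
  assumes "infinite (UNIV :: 'o::wellorder set)"
    and "\<And>k. k < n \<Longrightarrow> T ((T ^^ k) H0) \<noteq> (T ^^ k) H0"
    and "T ((T ^^ n) H0) = (T ^^ n) H0"
  shows "outcome TYPE('o) H0 T ((T ^^ n) H0)"
  unfolding outcome_def
proof (intro exI[of _ "ordinal_of_nat n"] conjI allI impI)
  show "iter H0 T (ordinal_of_nat n :: 'o) = (T ^^ n) H0"
    using assms(1) by (rule iter_ordinal_of_nat)
  fix b :: 'o
  assume "b < ordinal_of_nat n"
  then obtain k where "k < n" "b = ordinal_of_nat k"
    using lessThan_ordinal_of_nat[OF assms(1), of n] by auto
  with assms show "T (iter H0 T b) \<noteq> iter H0 T b" by (simp add: iter_ordinal_of_nat)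
qed (fact assms(3))

lemma outcome_one_step:
  assumes "infinite (UNIV :: 'o::wellorder set)" and "T H0 \<noteq> H0" and "T (T H0) = T H0"
  shows "outcome TYPE('o) H0 T (T H0)"
  using outcome_funpow[OF assms(1), where n = 1] assms(2,3) by simp

lemma outcome_two_steps:
  assumes "infinite (UNIV :: 'o::wellorder set)"
    and "T H0 \<noteq> H0" and "T (T H0) \<noteq> T H0" and "T (T (T H0)) = T (T H0)"
  shows "outcome TYPE('o) H0 T (T (T H0))"
proof -
  have "outcome TYPE('o) H0 T ((T ^^ 2) H0)"
    by (rule outcome_funpow[OF assms(1)]) (use assms(2-) in \<open>auto simp: numeral_2_eq_2 less_Suc_eq\<close>)
  then show ?thesis by (simp add: numeral_2_eq_2)
qed

lemma iter_in_orbit_if_reaches_empty: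
  assumes "infinite (UNIV :: 'o::wellorder set)"
    and "T ({}, {}) = ({}, {})" and "(T ^^ n) H0 = ({}, {})"
  shows "iter H0 T (a :: 'o) \<in> (\<lambda>k. (T ^^ k) H0) ` {..n}"
proof (cases "a < ordinal_of_nat n")
  case True
  then obtain k where "k < n" "a = ordinal_of_nat k"
    using lessThan_ordinal_of_nat[OF assms(1), of n] by auto
  then show ?thesis
    by (intro rev_image_eqI[of k]) (simp_all add: iter_ordinal_of_nat[OF assms(1)])
next
  case False
  have "iter H0 T (ordinal_of_nat n :: 'o) = ({}, {})"
    using assms(3) by (simp add: iter_ordinal_of_nat[OF assms(1)])
  moreover from False have "ordinal_of_nat n \<le> a"
    by (simp add: not_less)
  ultimately have "iter H0 T a = ({}, {})"
    by (rule iter_stays_empty[of T, OF assms(2)])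
  with assms(3) show ?thesis
    by (intro rev_image_eqI[of n]) simp_all
qed

definition best_responses_to :: "real set \<Rightarrow> real \<Rightarrow> real set" where
  "best_responses_to A mu = {s \<in> Strat. \<forall>s' \<in> A. p1 s' mu \<le> p1 s mu}"

definition best_responses :: "real set \<Rightarrow> real set \<Rightarrow> real set" where
  "best_responses A B = (\<Union>mu \<in> B. best_responses_to A mu)"

lemma p2_swap: "p2 mu s = p1 s mu"
  unfolding p1_def p2_def by auto

lemma LR_eq: "LR G = (best_responses (fst G) (snd G), best_responses (snd G) (fst G))"
  unfolding LR_def BR1_def BR2_def best_responses_def best_responses_to_def p2_swap by auto

lemma GR_eq: "GR G = (best_responses Strat (snd G), best_responses Strat (fst G))"
  unfolding GR_def BR1_def BR2_def best_responses_def best_responses_to_def p2_swap Hg_def by auto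

lemma p1_le_profit: "s \<in> Strat \<Longrightarrow> p1 s mu \<le> s * (100 - s)"
  by (auto simp: p1_def Strat_def)

text \<open>Every s is beaten by undercutting: by (s + mu) / 2 if s < mu, and by mu / 2 otherwise.\<close>
lemma best_responses_to_undercut:
  assumes "0 < mu" "mu \<le> 50" "{0<..<mu} \<subseteq> A"
  shows "best_responses_to A mu = {}"
proof -
  have "\<exists>s' \<in> A. p1 s mu < p1 s' mu" if "s \<in> Strat" for s
  proof (cases "s < mu")
    case True
    define s' where "s' = (s + mu) / 2"
    have "0 < s" using that by (simp add: Strat_def)
    have "s < s'" "s' < mu" using True unfolding s'_def by auto
    with \<open>0 < s\<close> assms have "s' \<in> A" by auto
    moreover have "s * (100 - s) < s' * (100 - s')"
    proof -
      have "0 < (s' - s) * (100 - s - s')" using \<open>s < s'\<close> \<open>s' < mu\<close> True assms by simp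
      then show ?thesis by (simp add: algebra_simps)
    qed
    ultimately show ?thesis using True \<open>s < s'\<close> \<open>s' < mu\<close> by (intro bexI[of _ s']) (simp_all add: p1_def)
  next
    case False
    have "mu / 2 \<in> A" using assms by auto
    moreover have "p1 s mu \<le> mu * (100 - mu) / 2"
      using False assms by (auto simp: p1_def)
    moreover have "p1 (mu / 2) mu = mu * (100 - mu) / 2 + mu * mu / 4"
      using assms by (simp add: p1_def field_simps)
    moreover have "0 < mu * mu" using assms by simp
    ultimately have "p1 s mu < p1 (mu / 2) mu" by linarith
    with \<open>mu / 2 \<in> A\<close> show ?thesis by blast
  qed
  then show ?thesis unfolding best_responses_to_def by (auto simp: not_le)
qed

lemma best_responses_to_Strat_above_50:
  assumes "50 < mu" "mu \<le> 100"
  shows "best_responses_to Strat mu = {50}"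
proof -
  have p50: "p1 50 mu = 2500" using assms by (simp add: p1_def)
  have less: "p1 s mu < 2500" if "s \<in> Strat" "s \<noteq> 50" for s
  proof -
    have "0 < (s - 50)\<^sup>2" using \<open>s \<noteq> 50\<close> by simp
    then have "s * (100 - s) < 2500" by (simp add: power2_eq_square algebra_simps)
    with p1_le_profit[OF \<open>s \<in> Strat\<close>, of mu] show ?thesis by linarith
  qed
  have "(50::real) \<in> Strat" by (simp add: Strat_def)
  moreover from less p50 have "p1 s mu \<le> p1 50 mu" if "s \<in> Strat" for s
    using that by (cases "s = 50") (simp_all add: less_imp_le)
  ultimately show ?thesis
    unfolding best_responses_to_def using less p50 by fastforce
qed

lemma greaterThanLessThan_subset_Strat: "mu \<le> 100 \<Longrightarrow> {0<..<mu} \<subseteq> Strat"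
  by (auto simp: Strat_def)

lemma best_responses_Strat_Strat: "best_responses Strat Strat = {50}"
proof -
  have "best_responses_to Strat mu = (if 50 < mu then {50} else {})" if "mu \<in> Strat" for mu
    using that best_responses_to_undercut[OF _ _ greaterThanLessThan_subset_Strat] best_responses_to_Strat_above_50[of mu]
    by (auto simp: Strat_def)
  moreover have "(100::real) \<in> Strat" by (simp add: Strat_def)
  ultimately show ?thesis
    unfolding best_responses_def by (auto split: if_splits intro!: bexI[of _ 100])
qed

lemma best_responses_Strat_50: "best_responses Strat {50} = {}"
  using best_responses_to_undercut[OF _ _ greaterThanLessThan_subset_Strat, of 50] by (simp add: best_responses_def)

lemma best_responses_half: "best_responses {0<..50} {0<..50} = {}"
proof -
  have "best_responses_to {0<..50} mu = {}" if "mu \<in> {0<..50}" for mu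
    using that by (intro best_responses_to_undercut) auto
  then show ?thesis by (simp add: best_responses_def)
qed

lemma best_responses_50_50: "{49, 50} \<subseteq> best_responses {50} {50}"
  by (simp add: best_responses_def best_responses_to_def Strat_def p1_def)

lemma LR_Hg: "LR Hg = ({50}, {50})"
  by (simp add: LR_eq Hg_def best_responses_Strat_Strat)

lemma barop_LR_Hg: "barop LR Hg = ({50}, {50})"
  by (simp add: barop_def LR_Hg) (simp add: Hg_def Strat_def)

lemma barop_GR_Hg: "barop GR Hg = ({50}, {50})"
  by (simp add: barop_def GR_eq Hg_def best_responses_Strat_Strat) (simp add: Strat_def)

lemma barop_LR_50: "barop LR ({50}, {50}) = ({50}, {50})"
  using best_responses_50_50 by (auto simp: barop_def LR_eq)

lemma barop_GR_50: "barop GR ({50}, {50}) = ({}, {})"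
  by (simp add: barop_def GR_eq best_responses_Strat_50)

lemma barop_LR_half: "barop LR ({0<..50}, {0<..50}) = ({}, {})"
  by (simp add: barop_def LR_eq best_responses_half)

lemma barop_empty: "barop T ({}, {}) = ({}, {})"
  by (simp add: barop_def)

lemma Hg_neq: "Hg \<noteq> ({50}, {50})" "Hg \<noteq> ({0<..50}, {0<..50})"
proof -
  have "(100::real) \<in> fst Hg" "(100::real) \<notin> {50}" "(100::real) \<notin> {0<..50}"
    by (simp_all add: Hg_def Strat_def)
  then show "Hg \<noteq> ({50}, {50})" "Hg \<noteq> ({0<..50}, {0<..50})"
    by (metis fst_conv)+
qed

lemma Rrel_Hg: "Rrel Hg = ({0<..50}, {0<..50})"
  by (simp add: Rrel_def)

lemma Rrel_half: "Rrel ({0<..50}, {0<..50}) = ({}, {})"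
  using Hg_neq by (simp add: Rrel_def barop_LR_half)

lemma Rrel_empty: "Rrel ({}, {}) = ({}, {})"
  by (simp add: Rrel_def barop_empty Hg_def Strat_def)

lemma iter_Rrel_cases:
  assumes "infinite (UNIV :: 'o::wellorder set)"
  shows "iter Hg Rrel (a :: 'o) \<in> {Hg, ({0<..50}, {0<..50}), ({}, {})}"
proof -
  have "(\<lambda>k. (Rrel ^^ k) Hg) ` {..2} = {Hg, ({0<..50}, {0<..50}), ({}, {})}"
    by (auto simp: numeral_2_eq_2 atMost_Suc Rrel_Hg Rrel_half)
  with iter_in_orbit_if_reaches_empty[OF assms, of Rrel 2 Hg] show ?thesis
    by (simp add: numeral_2_eq_2 Rrel_Hg Rrel_half Rrel_empty)
qed

lemma relaxation_refl: "relaxation t H0 T T"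
  unfolding relaxation_def rle_def Let_def by simp

lemma relaxation_Rrel:
  assumes "infinite (UNIV :: 'o::wellorder set)"
  shows "relaxation TYPE('o) Hg Rrel (barop LR)"
  unfolding relaxation_def Let_def
proof
  fix a :: 'o
  let ?X = "iter Hg Rrel a"
  have "{0<..50} \<subseteq> Strat" by (auto simp: Strat_def)
  then have "rle (barop LR X) (Rrel X) \<and> (rle (barop LR X) X \<longrightarrow> rle (Rrel X) X)
      \<and> (Rrel X = X \<longrightarrow> barop LR X = X)" if "X \<in> {Hg, ({0<..50}, {0<..50}), ({}, {})}" for X
    using that Hg_neq
    by (auto simp: rle_def barop_LR_Hg barop_LR_half barop_empty Rrel_Hg Rrel_half Rrel_empty)
       (auto simp: Hg_def)
  from this[OF iter_Rrel_cases[OF assms]]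
  show "rle (barop LR ?X) (Rrel ?X) \<and> (rle (barop LR ?X) ?X \<longrightarrow> rle (Rrel ?X) ?X)
      \<and> (Rrel ?X = ?X \<longrightarrow> barop LR ?X = ?X)" .
qed

lemma not_order_independent:
  assumes "relaxation t H0 R1 T" "outcome t H0 R1 X" "relaxation t H0 R2 T" "outcome t H0 R2 Y"
    and "X \<noteq> Y"
  shows "\<not> order_independent t H0 T"
  using assms unfolding order_independent_def by blast

theorem mainTheorem14:
  assumes "infinite (UNIV :: 'o::wellorder set)"
  shows "barop LR Hg = ({50}, {50}) \<and> barop LR ({50}, {50}) = ({50}, {50})
       \<and> outcome TYPE('o) Hg (barop LR) ({50}, {50})
       \<and> relaxation TYPE('o) Hg Rrel (barop LR) \<and> outcome TYPE('o) Hg Rrel ({}, {})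
       \<and> \<not> order_independent TYPE('o) Hg (barop LR)
       \<and> barop GR Hg = ({50}, {50}) \<and> barop GR (barop GR Hg) = ({}, {})
       \<and> outcome TYPE('o) Hg (barop GR) ({}, {})
       \<and> LR Hg = ({50}, {50}) \<and> 49 \<in> fst (LR (LR Hg)) \<and> 49 \<in> snd (LR (LR Hg))
       \<and> \<not> rle (LR (LR Hg)) (LR Hg)"
proof -
  have outcome_LR: "outcome TYPE('o) Hg (barop LR) ({50}, {50})"
    using outcome_one_step[OF assms, of "barop LR" Hg] Hg_neq by (simp add: barop_LR_Hg barop_LR_50)
  have outcome_Rrel: "outcome TYPE('o) Hg Rrel ({}, {})"
    using outcome_two_steps[OF assms, of Rrel Hg] Hg_neq by (simp add: Rrel_Hg Rrel_half Rrel_empty)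
  have outcome_GR: "outcome TYPE('o) Hg (barop GR) ({}, {})"
    using outcome_two_steps[OF assms, of "barop GR" Hg] Hg_neq
    by (simp add: barop_GR_Hg barop_GR_50 barop_empty)
  have "\<not> order_independent TYPE('o) Hg (barop LR)"
    using relaxation_refl outcome_LR relaxation_Rrel[OF assms] outcome_Rrel
    by (rule not_order_independent) simp
  moreover have "barop GR (barop GR Hg) = ({}, {})"
    by (simp add: barop_GR_Hg barop_GR_50)
  moreover have "LR (LR Hg) = (best_responses {50} {50}, best_responses {50} {50})"
    by (simp only: LR_Hg) (simp add: LR_eq)
  with best_responses_50_50 have "49 \<in> fst (LR (LR Hg))" "49 \<in> snd (LR (LR Hg))"
    by auto
  moreover from this have "\<not> rle (LR (LR Hg)) (LR Hg)"
    unfolding rle_def LR_Hg by auto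
  ultimately show ?thesis
    using barop_LR_Hg barop_LR_50 outcome_LR relaxation_Rrel[OF assms] outcome_Rrel
      barop_GR_Hg outcome_GR LR_Hg
    by blast
qed

end
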